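(* Let $f: (\mathbb{R}^{+})^n \to (\mathbb{R}^{+})^n$ be homogeneous and monotone. If the associated graph $\mathcal{G}(f)$ is strongly connected, then $f$ has an eigenvector in $(\mathbb{R}^{+})^n$, i.e. there exist $x \in (\mathbb{R}^{+})^n$ and $\lambda \in \mathbb{R}^{+}$ with $f(x) = \lambda x$.
   Context: $\mathbb{R}^{+} = \{x \in \mathbb{R} : x > 0\}$. A map $f: (\mathbb{R}^{+})^n \to (\mathbb{R}^{+})^n$ is homogeneous if $f(\lambda x) = \lambda f(x)$ for all $\lambda \in \mathbb{R}^{+}$, $x \in (\mathbb{R}^{+})^n$, and monotone if $x \le y$ (componentwise) implies $f(x) \le f(y)$. For $u \in \mathbb{R}^{+}$ and $J \subseteq \{1,\dots,n\}$, $u_J \in (\mathbb{R}^{+})^n$ is the vector with $(u_J)_i = u$ if $i \in J$ and $(u_J)_i = 1$ otherwise. The associated graph $\mathcal{G}(f)$ is the directed graph on vertices $1,\dots,n$ with an edge from $i$ to $j$ iff $\lim_{u \to \infty} f_i(u_{\{j\}}) = \infty$. A directed graph is strongly connected if there is a directed path between any two distinct vertices. *)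

theory Defs
  imports "HOL-Analysis.Analysis"
begin

definition pos_vec :: "real ^ 'n \<Rightarrow> bool" where
  "pos_vec x \<longleftrightarrow> (\<forall>i. x $ i > 0)"

definition maps_pos :: "(real ^ 'n \<Rightarrow> real ^ 'n) \<Rightarrow> bool" where
  "maps_pos f \<longleftrightarrow> (\<forall>x. pos_vec x \<longrightarrow> pos_vec (f x))"

definition homogeneous_map :: "(real ^ 'n \<Rightarrow> real ^ 'n) \<Rightarrow> bool" where
  "homogeneous_map f \<longleftrightarrow>
     (\<forall>l x. l > 0 \<longrightarrow> pos_vec x \<longrightarrow> f (l *\<^sub>R x) = l *\<^sub>R f x)"

definition monotone_map :: "(real ^ 'n \<Rightarrow> real ^ 'n) \<Rightarrow> bool" where
  "monotone_map f \<longleftrightarrow>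
     (\<forall>x y. pos_vec x \<longrightarrow> pos_vec y \<longrightarrow> (\<forall>i. x $ i \<le> y $ i) \<longrightarrow>
        (\<forall>i. f x $ i \<le> f y $ i))"

definition uvec :: "real \<Rightarrow> 'n set \<Rightarrow> real ^ 'n" where
  "uvec u J = (\<chi> i. if i \<in> J then u else 1)"

definition assoc_graph :: "(real ^ 'n \<Rightarrow> real ^ 'n) \<Rightarrow> ('n \<times> 'n) set" where
  "assoc_graph f = {(i, j). filterlim (\<lambda>u. f (uvec u {j}) $ i) at_top at_top}"

definition strongly_connected_rel :: "('n \<times> 'n) set \<Rightarrow> bool" where
  "strongly_connected_rel E \<longleftrightarrow> (\<forall>i j. i \<noteq> j \<longrightarrow> (i, j) \<in> E\<^sup>+)"

end

theory Submission
  imports Defs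
begin

text \<open>Truncating f from below, g(x) = max(f(x), \<epsilon> \<Sum>x) componentwise, gives a map of the
positive cone (continuous, as monotone homogeneous maps are) whose values are comparable to the
coordinate sum. Brouwer's theorem applied to x \<mapsto> g(x) / \<Sum>g(x) on a box yields a positive
eigenvector x of g, with eigenvalue at most L = \<Sum>(f(1) + 1) when \<epsilon> \<le> 1, so f(x) \<le> L x.
Monotonicity turns each edge (i, j) of the associated graph into an implication: if x \<ge> 1 and
f(x) \<le> L x, then a bound on x_i bounds x_j. By strong connectivity, every positive x with
f(x) \<le> L x has all ratios x_k / x_j bounded by a constant D that does not depend on \<epsilon>.
Choosing \<epsilon> \<le> min f(1) / (n D) then forces f(x) \<ge> \<epsilon>, so the truncation is inactive at x.\<close>

lemma pos_vec_scaleR: "pos_vec x \<Longrightarrow> c > 0 \<Longrightarrow> pos_vec (c *\<^sub>R x)"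
  by (simp add: pos_vec_def)

lemma monotone_homogeneous_scale_le:
  fixes f :: "real ^ 'n \<Rightarrow> real ^ 'n"
  assumes hom: "homogeneous_map f" and mon: "monotone_map f"
    and px: "pos_vec x" and py: "pos_vec y" and a: "a > 0"
    and le: "\<And>k. y $ k \<le> a * x $ k"
  shows "f y $ i \<le> a * f x $ i"
proof -
  have "f y $ i \<le> f (a *\<^sub>R x) $ i"
    using mon py pos_vec_scaleR[OF px a] le unfolding monotone_map_def by auto
  also have "\<dots> = a * f x $ i"
    using hom a px unfolding homogeneous_map_def by simp
  finally show ?thesis .
qed

lemma monotone_homogeneous_dist_le:
  fixes f :: "real ^ 'n \<Rightarrow> real ^ 'n"
  assumes mp: "maps_pos f" and hom: "homogeneous_map f" and mon: "monotone_map f"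
    and px: "pos_vec x" and py: "pos_vec y" and c: "c \<ge> 1"
    and yx: "\<And>k. y $ k \<le> c * x $ k" and xy: "\<And>k. x $ k \<le> c * y $ k"
  shows "\<bar>f y $ i - f x $ i\<bar> \<le> (c - 1) * f x $ i"
proof (rule abs_leI)
  have up: "f y $ i \<le> c * f x $ i"
    using monotone_homogeneous_scale_le[OF hom mon px py _ yx] c by simp
  then show "f y $ i - f x $ i \<le> (c - 1) * f x $ i" by (simp add: algebra_simps)
  have lo: "f x $ i \<le> c * f y $ i"
    using monotone_homogeneous_scale_le[OF hom mon py px _ xy] c by simp
  have "0 \<le> (c - 1) * f x $ i"
    using c mp px by (simp add: maps_pos_def pos_vec_def less_imp_le)
  moreover have "f x $ i - f y $ i \<le> (c - 1) * f x $ i" if "f y $ i \<le> f x $ i"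
  proof -
    have "f x $ i - f y $ i \<le> c * (f x $ i - f y $ i)"
      using mult_right_mono[of 1 c "f x $ i - f y $ i"] c that by simp
    also have "\<dots> \<le> (c - 1) * f x $ i" using lo by (simp add: algebra_simps)
    finally show ?thesis .
  qed
  ultimately show "- (f y $ i - f x $ i) \<le> (c - 1) * f x $ i" by linarith
qed

lemma continuous_on_pos_vec_if_monotone_homogeneous:
  fixes f :: "real ^ 'n \<Rightarrow> real ^ 'n"
  assumes mp: "maps_pos f" and hom: "homogeneous_map f" and mon: "monotone_map f"
  shows "continuous_on {x. pos_vec x} f"
  unfolding continuous_on_def
proof (intro ballI vec_tendstoI)
  fix x :: "real ^ 'n" and i
  assume "x \<in> {x. pos_vec x}"
  then have x_pos: "x $ k > 0" for k by (simp add: pos_vec_def)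
  define c where "c y = 1 + (\<Sum>k\<in>UNIV. \<bar>y $ k - x $ k\<bar> / x $ k + \<bar>y $ k - x $ k\<bar> / y $ k)"
    for y :: "real ^ 'n"
  have "((\<lambda>y. (c y - 1) * f x $ i) \<longlongrightarrow> (c x - 1) * f x $ i) (at x within {x. pos_vec x})"
    unfolding c_def using x_pos by (intro tendsto_intros) (simp_all add: less_imp_neq[symmetric])
  then have c_lim: "((\<lambda>y. (c y - 1) * f x $ i) \<longlongrightarrow> 0) (at x within {x. pos_vec x})"
    by (simp add: c_def)
  have "\<bar>f y $ i - f x $ i\<bar> \<le> (c y - 1) * f x $ i" if py: "pos_vec y" for y
  proof -
    have y_pos: "y $ k > 0" for k using py by (simp add: pos_vec_def)
    have x_term: "0 \<le> \<bar>y $ k - x $ k\<bar> / x $ k" and y_term: "0 \<le> \<bar>y $ k - x $ k\<bar> / y $ k" for k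
      using x_pos y_pos by (simp_all add: less_imp_le)
    have terms_le: "\<bar>y $ k - x $ k\<bar> / x $ k + \<bar>y $ k - x $ k\<bar> / y $ k \<le> c y - 1" for k
      unfolding c_def by (simp, rule member_le_sum) (simp_all add: x_term y_term)
    have "c y \<ge> 1"
      unfolding c_def by (simp add: sum_nonneg x_term y_term)
    moreover have "y $ k \<le> c y * x $ k" for k
    proof -
      have "y $ k \<le> x $ k + \<bar>y $ k - x $ k\<bar>"
        using abs_ge_self[of "y $ k - x $ k"] by linarith
      also have "\<dots> = (1 + \<bar>y $ k - x $ k\<bar> / x $ k) * x $ k"
        using x_pos[of k] by (simp add: field_simps)
      also have "\<dots> \<le> c y * x $ k"
        using terms_le[of k] y_term[of k] x_pos[of k] by (intro mult_right_mono) auto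
      finally show ?thesis .
    qed
    moreover have "x $ k \<le> c y * y $ k" for k
    proof -
      have "x $ k \<le> y $ k + \<bar>y $ k - x $ k\<bar>"
        using abs_ge_minus_self[of "y $ k - x $ k"] by linarith
      also have "\<dots> = (1 + \<bar>y $ k - x $ k\<bar> / y $ k) * y $ k"
        using y_pos[of k] by (simp add: field_simps)
      also have "\<dots> \<le> c y * y $ k"
        using terms_le[of k] x_term[of k] y_pos[of k] by (intro mult_right_mono) auto
      finally show ?thesis .
    qed
    ultimately show ?thesis
      using x_pos py by (intro monotone_homogeneous_dist_le[OF mp hom mon]) (simp_all add: pos_vec_def)
  qed
  then have "eventually (\<lambda>y. norm (f y $ i - f x $ i) \<le> (c y - 1) * f x $ i)
      (at x within {x. pos_vec x})"
    by (auto simp: eventually_at_filter)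
  from Lim_null_comparison[OF this c_lim]
  show "((\<lambda>y. f y $ i) \<longlongrightarrow> f x $ i) (at x within {x. pos_vec x})"
    by (simp add: Lim_null[of "\<lambda>y. f y $ i"])
qed

definition normalized_subeigenvector :: "(real ^ 'n \<Rightarrow> real ^ 'n) \<Rightarrow> real \<Rightarrow> real ^ 'n \<Rightarrow> bool" where
  "normalized_subeigenvector f L x \<longleftrightarrow> (\<forall>k. 1 \<le> x $ k) \<and> (\<forall>k. f x $ k \<le> L * x $ k)"

lemma assoc_graph_edge_bound:
  fixes f :: "real ^ 'n \<Rightarrow> real ^ 'n"
  assumes mon: "monotone_map f" and L: "L \<ge> 0" and edge: "(i, j) \<in> assoc_graph f"
  shows "\<exists>U. \<forall>x. normalized_subeigenvector f L x \<and> x $ i \<le> t \<longrightarrow> x $ j \<le> U"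
proof -
  have "filterlim (\<lambda>u. f (uvec u {j}) $ i) at_top at_top"
    using edge by (simp add: assoc_graph_def)
  then obtain N where N: "\<And>u. u \<ge> N \<Longrightarrow> L * t < f (uvec u {j}) $ i"
    by (auto simp: filterlim_at_top_dense eventually_at_top_linorder)
  have "x $ j \<le> N" if "normalized_subeigenvector f L x" and xi: "x $ i \<le> t" for x
  proof (rule ccontr)
    have ge1: "\<forall>k. 1 \<le> x $ k" and sub: "\<forall>k. f x $ k \<le> L * x $ k"
      using that(1) by (simp_all add: normalized_subeigenvector_def)
    assume "\<not> x $ j \<le> N"
    then have "L * t < f (uvec (x $ j) {j}) $ i" by (intro N) simp
    also have "\<dots> \<le> f x $ i"
    proof -
      have "pos_vec x" "pos_vec (uvec (x $ j) {j})"
        using ge1 by (auto simp: pos_vec_def uvec_def intro: less_le_trans[OF zero_less_one])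
      moreover have "\<forall>k. uvec (x $ j) {j} $ k \<le> x $ k" using ge1 by (simp add: uvec_def)
      ultimately show ?thesis using mon unfolding monotone_map_def by blast
    qed
    also have "\<dots> \<le> L * t"
      using sub xi L by (meson order_trans mult_left_mono)
    finally show False by simp
  qed
  then show ?thesis by blast
qed

lemma assoc_graph_path_bound:
  fixes f :: "real ^ 'n \<Rightarrow> real ^ 'n"
  assumes mon: "monotone_map f" and L: "L \<ge> 0" and path: "(i, j) \<in> (assoc_graph f)\<^sup>+"
  shows "\<exists>U. \<forall>x. normalized_subeigenvector f L x \<and> x $ i \<le> t \<longrightarrow> x $ j \<le> U"
  using path
proof (induction j arbitrary: t rule: trancl_induct)
  case (base j)
  then show ?case using assoc_graph_edge_bound[OF mon L] by blast
next
  case (step j k)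
  obtain U where "\<forall>x. normalized_subeigenvector f L x \<and> x $ i \<le> t \<longrightarrow> x $ j \<le> U"
    using step.IH by blast
  moreover obtain V where "\<forall>x. normalized_subeigenvector f L x \<and> x $ j \<le> U \<longrightarrow> x $ k \<le> V"
    using assoc_graph_edge_bound[OF mon L step.hyps(2)] by blast
  ultimately show ?case by blast
qed

lemma strongly_connected_ratio_bound:
  fixes f :: "real ^ 'n \<Rightarrow> real ^ 'n"
  assumes hom: "homogeneous_map f" and mon: "monotone_map f"
    and sc: "strongly_connected_rel (assoc_graph f)" and L: "L \<ge> 0"
  shows "\<exists>D>0. \<forall>x. pos_vec x \<and> (\<forall>k. f x $ k \<le> L * x $ k) \<longrightarrow> (\<forall>j k. x $ k \<le> D * x $ j)"
proof -
  have "\<forall>j k. \<exists>U. \<forall>x. normalized_subeigenvector f L x \<and> x $ j \<le> 1 \<longrightarrow> x $ k \<le> U"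
  proof (intro allI)
    fix j k :: 'n
    show "\<exists>U. \<forall>x. normalized_subeigenvector f L x \<and> x $ j \<le> 1 \<longrightarrow> x $ k \<le> U"
    proof (cases "j = k")
      case False
      with sc have "(j, k) \<in> (assoc_graph f)\<^sup>+" by (simp add: strongly_connected_rel_def)
      then show ?thesis by (rule assoc_graph_path_bound[OF mon L])
    qed blast
  qed
  then obtain U where U: "\<And>j k x. normalized_subeigenvector f L x \<Longrightarrow> x $ j \<le> 1 \<Longrightarrow> x $ k \<le> U j k"
    unfolding choice_iff by blast
  define D where "D = max 1 (Max (range (\<lambda>(j, k). U j k)))"
  have D_pos: "D > 0" by (simp add: D_def)
  have bound: "x $ k \<le> D * x $ j" if px: "pos_vec x" and sub: "\<forall>k. f x $ k \<le> L * x $ k" for x j k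
  proof -
    define m where "m = Min (range (\<lambda>k. x $ k))"
    have "m \<in> range (\<lambda>k. x $ k)" unfolding m_def by (rule Min_in) auto
    then obtain j0 where j0: "x $ j0 = m" by auto
    have m_le: "m \<le> x $ k" for k unfolding m_def by simp
    have m: "m > 0" using px unfolding pos_vec_def j0[symmetric] by blast
    define y where "y = (1 / m) *\<^sub>R x"
    have "f y = (1 / m) *\<^sub>R f x"
      using hom px m unfolding y_def homogeneous_map_def by simp
    then have "y $ k \<le> U j0 k"
      using m m_le sub j0 by (intro U) (auto simp: normalized_subeigenvector_def y_def field_simps)
    also have "\<dots> \<le> D"
      unfolding D_def by (intro max.coboundedI2 Max_ge) auto
    finally have "x $ k \<le> D * m"
      using m by (simp add: y_def field_simps)
    also have "\<dots> \<le> D * x $ j"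
      using m_le[of j] D_pos by simp
    finally show ?thesis .
  qed
  with D_pos show ?thesis by blast
qed

lemma positive_eigenvector_brouwer:
  fixes g :: "real ^ 'n \<Rightarrow> real ^ 'n"
  assumes cont: "continuous_on {x. pos_vec x} g" and c: "c > 0"
    and lower: "\<And>x i. pos_vec x \<Longrightarrow> c * (\<Sum>k\<in>UNIV. x $ k) \<le> g x $ i"
    and upper: "\<And>x i. pos_vec x \<Longrightarrow> g x $ i \<le> b i * (\<Sum>k\<in>UNIV. x $ k)"
  shows "\<exists>x \<sigma>. pos_vec x \<and> (\<Sum>k\<in>UNIV. x $ k) = 1 \<and> g x = \<sigma> *\<^sub>R x"
proof -
  let ?s = "\<lambda>x :: real ^ 'n. \<Sum>k\<in>UNIV. x $ k"
  have s_pos: "?s x > 0" if "pos_vec x" for x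
    using that by (intro sum_pos) (auto simp: pos_vec_def)
  have g_pos: "pos_vec (g x)" if "pos_vec x" for x
    unfolding pos_vec_def
    using lower[OF that] s_pos[OF that] c by (meson less_le_trans mult_pos_pos)
  have "c * real CARD('n) \<le> b i * real CARD('n)" for i
    using order_trans[OF lower[of 1 i] upper[of 1 i]] by (simp add: pos_vec_def)
  then have "c \<le> b i" for i by (rule mult_right_le_imp_le) simp
  then have B: "sum b UNIV > 0"
    using c by (intro sum_pos) (auto intro: less_le_trans)
  define r where "r = c / sum b UNIV"
  have r: "r > 0" unfolding r_def using B c by simp
  define K :: "(real ^ 'n) set" where "K = cbox (\<chi> i. r) 1"
  have memK: "x \<in> K \<longleftrightarrow> (\<forall>i. r \<le> x $ i \<and> x $ i \<le> 1)" for x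
    unfolding K_def mem_box_cart(2) by simp
  have K_pos: "pos_vec x" if "x \<in> K" for x
    using that r unfolding memK pos_vec_def by (meson less_le_trans)
  define P where "P x = (1 / ?s (g x)) *\<^sub>R g x" for x
  have P_in_K: "P x \<in> K" if px: "pos_vec x" for x
  proof -
    have sg: "?s (g x) > 0" by (rule s_pos[OF g_pos[OF px]])
    have "?s (g x) \<le> sum b UNIV * ?s x"
      unfolding sum_distrib_right using upper[OF px] by (intro sum_mono) simp
    then have "r * ?s (g x) \<le> r * (sum b UNIV * ?s x)"
      using r by (intro mult_left_mono) simp_all
    also have "\<dots> = c * ?s x" using B by (simp add: r_def)
    also have "\<dots> \<le> g x $ i" for i by (rule lower[OF px])
    finally have "r \<le> P x $ i" for i
      using sg by (simp add: P_def pos_le_divide_eq)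
    moreover have "P x $ i \<le> 1" for i
    proof -
      have "g x $ i \<le> ?s (g x)"
        using g_pos[OF px] by (intro member_le_sum) (auto simp: pos_vec_def less_imp_le)
      then show ?thesis using sg by (simp add: P_def)
    qed
    ultimately show ?thesis by (simp add: memK)
  qed
  have sg_nz: "?s (g x) \<noteq> 0" if "x \<in> K" for x
    using s_pos[OF g_pos[OF K_pos[OF that]]] by simp
  have "continuous_on K g"
    by (rule continuous_on_subset[OF cont]) (auto intro: K_pos)
  then have "continuous_on K P"
    unfolding P_def by (intro continuous_intros) (simp_all add: sg_nz)
  moreover have "compact K" "convex K" "K \<noteq> {}"
    using P_in_K[of 1] by (auto simp: K_def pos_vec_def)
  ultimately obtain x where xK: "x \<in> K" and fixed: "P x = x"
    using brouwer[of K P] P_in_K K_pos by blast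
  have px: "pos_vec x" by (rule K_pos[OF xK])
  have sg: "?s (g x) > 0" by (rule s_pos[OF g_pos[OF px]])
  have "?s x = ?s (P x)" using fixed by simp
  also have "\<dots> = 1" using sg by (simp add: P_def sum_divide_distrib[symmetric])
  finally have "?s x = 1" .
  moreover have "g x = ?s (g x) *\<^sub>R P x" using sg by (simp add: P_def)
  ultimately show ?thesis using px fixed by auto
qed

lemma truncated_eigenvector:
  fixes f :: "real ^ 'n \<Rightarrow> real ^ 'n"
  assumes mp: "maps_pos f" and hom: "homogeneous_map f" and mon: "monotone_map f"
    and \<epsilon>: "0 < \<epsilon>" "\<epsilon> \<le> 1"
  shows "\<exists>x \<sigma>. pos_vec x \<and> (\<Sum>k\<in>UNIV. x $ k) = 1 \<and> \<sigma> \<le> (\<Sum>k\<in>UNIV. f 1 $ k + 1)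
    \<and> (\<forall>i. max (f x $ i) \<epsilon> = \<sigma> * x $ i)"
proof -
  let ?s = "\<lambda>x :: real ^ 'n. \<Sum>k\<in>UNIV. x $ k"
  define g where "g x = (\<chi> i. max (f x $ i) (\<epsilon> * ?s x))" for x
  have g_le: "g x $ i \<le> (f 1 $ i + \<epsilon>) * ?s x" if px: "pos_vec x" for x i
  proof -
    have s_pos: "?s x > 0" using px by (intro sum_pos) (auto simp: pos_vec_def)
    have "x $ k \<le> ?s x * 1 $ k" for k
      using px by (simp add: member_le_sum pos_vec_def less_imp_le)
    then have "f x $ i \<le> ?s x * f 1 $ i"
      using px s_pos by (intro monotone_homogeneous_scale_le[OF hom mon]) (simp_all add: pos_vec_def)
    moreover have "0 \<le> f 1 $ i * ?s x" "0 \<le> \<epsilon> * ?s x"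
      using mp px s_pos \<epsilon> by (simp_all add: maps_pos_def pos_vec_def less_imp_le)
    ultimately show ?thesis by (simp add: g_def algebra_simps)
  qed
  have "continuous_on {x. pos_vec x} g"
    unfolding g_def
    by (intro continuous_intros continuous_on_pos_vec_if_monotone_homogeneous[OF mp hom mon])
  then obtain x \<sigma> where px: "pos_vec x" and sx: "?s x = 1" and eig: "g x = \<sigma> *\<^sub>R x"
    using positive_eigenvector_brouwer[of g \<epsilon> "\<lambda>i. f 1 $ i + \<epsilon>"] g_le \<epsilon>
    by (auto simp: g_def)
  have gx: "g x $ i = \<sigma> * x $ i" for i using eig by simp
  have "\<sigma> = (\<Sum>k\<in>UNIV. g x $ k)"
    using sx by (simp add: gx sum_distrib_left[symmetric])
  also have "\<dots> \<le> (\<Sum>k\<in>UNIV. f 1 $ k + 1)"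
  proof (rule sum_mono)
    fix k
    show "g x $ k \<le> f 1 $ k + 1" using g_le[OF px, of k] sx \<epsilon> by simp
  qed
  moreover have "max (f x $ i) \<epsilon> = \<sigma> * x $ i" for i
    using gx[of i] sx by (simp add: g_def)
  ultimately show ?thesis using px sx by blast
qed

lemma image_lower_bound_if_ratio_bounded:
  fixes f :: "real ^ 'n \<Rightarrow> real ^ 'n"
  assumes hom: "homogeneous_map f" and mon: "monotone_map f"
    and px: "pos_vec x" and sx: "(\<Sum>k\<in>UNIV. x $ k) = 1"
    and D: "D > 0" and ratio: "\<And>j k. x $ k \<le> D * x $ j"
  shows "f 1 $ i / (real CARD('n) * D) \<le> f x $ i"
proof -
  have "1 \<le> real CARD('n) * D * x $ j" for j
  proof -
    have "(\<Sum>k\<in>UNIV. x $ k) \<le> (\<Sum>k::'n\<in>UNIV. D * x $ j)" by (intro sum_mono ratio)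
    then show ?thesis by (simp add: sx mult.assoc)
  qed
  then have "f 1 $ i \<le> real CARD('n) * D * f x $ i"
    using px D by (intro monotone_homogeneous_scale_le[OF hom mon]) (simp_all add: pos_vec_def)
  then show ?thesis using D by (simp add: pos_divide_le_eq mult.commute)
qed

theorem theorem2:
  fixes f :: "real ^ 'n \<Rightarrow> real ^ 'n"
  assumes "maps_pos f"
    and "homogeneous_map f"
    and "monotone_map f"
    and "strongly_connected_rel (assoc_graph f)"
  shows "\<exists>x l. pos_vec x \<and> l > 0 \<and> f x = l *\<^sub>R x"
proof -
  note mp = assms(1) and hom = assms(2) and mon = assms(3) and sc = assms(4)
  have f1_pos: "f 1 $ i > 0" for i
    using mp by (simp add: maps_pos_def pos_vec_def)
  define L where "L = (\<Sum>k\<in>UNIV. f 1 $ k + 1)"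
  have "L \<ge> 0" unfolding L_def using f1_pos by (intro sum_nonneg) (simp add: less_imp_le)
  then obtain D where D: "D > 0"
    and ratio: "\<forall>x. pos_vec x \<and> (\<forall>k. f x $ k \<le> L * x $ k) \<longrightarrow> (\<forall>j k. x $ k \<le> D * x $ j)"
    using strongly_connected_ratio_bound[OF hom mon sc] by blast
  define \<epsilon> where "\<epsilon> = min 1 (Min (range (\<lambda>i. f 1 $ i / (real CARD('n) * D))))"
  have \<epsilon>: "\<epsilon> > 0" "\<epsilon> \<le> 1" using f1_pos D by (simp_all add: \<epsilon>_def)
  have \<epsilon>_le: "\<epsilon> \<le> f 1 $ i / (real CARD('n) * D)" for i
    unfolding \<epsilon>_def by (intro min.coboundedI2 Min_le) auto
  obtain x \<sigma> where px: "pos_vec x" and sx: "(\<Sum>k\<in>UNIV. x $ k) = 1" and \<sigma>L: "\<sigma> \<le> L"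
    and eig: "\<And>i. max (f x $ i) \<epsilon> = \<sigma> * x $ i"
    using truncated_eigenvector[OF mp hom mon \<epsilon>] by (auto simp: L_def)
  have "f x $ k \<le> L * x $ k" for k
  proof -
    have "f x $ k \<le> \<sigma> * x $ k" using eig[of k] by (metis max.cobounded1)
    also have "\<dots> \<le> L * x $ k" using \<sigma>L px by (simp add: mult_right_mono less_imp_le pos_vec_def)
    finally show ?thesis .
  qed
  then have "x $ k \<le> D * x $ j" for j k using ratio px by blast
  then have "f 1 $ i / (real CARD('n) * D) \<le> f x $ i" for i
    by (rule image_lower_bound_if_ratio_bounded[OF hom mon px sx D])
  then have "\<epsilon> \<le> f x $ i" for i by (rule order_trans[OF \<epsilon>_le])
  then have "f x $ i = \<sigma> * x $ i" for i using eig[of i] by (simp add: max_absorb1)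
  moreover have "\<sigma> > 0"
    using calculation px mp by (metis maps_pos_def pos_vec_def zero_less_mult_pos2)
  ultimately show ?thesis using px by (auto simp: vec_eq_iff)
qed

end
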